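(* For any finite group $G$, we have $\alpha_{G,n}\sim |Z(G)|\,|G|^{n-1}$ and $\beta_{G,n}\sim C a^n$ as $n\to\infty$, where $a$ is the maximal cardinality of an abelian subgroup of $G$ and $C$ is some positive constant (depending on $G$). Here $a_n\sim b_n$ means $\lim_{n\to\infty}a_n/b_n=1$.
   Context: For a finite group $G$ and an integer $n\ge 0$, $G$ acts on $G^n$ by simultaneous conjugation $g\cdot(x_1,\dots,x_n)=(gx_1g^{-1},\dots,gx_ng^{-1})$. Let $G^{(n)}=\{(x_1,\dots,x_n)\in G^n : x_ix_j=x_jx_i \text{ for all } 1\le i,j\le n\}$, which is stable under this action. Let $\alpha_{G,n}$ be the number of $G$-orbits on $G^n$ and $\beta_{G,n}$ the number of $G$-orbits on $G^{(n)}$. $Z(G)$ denotes the center of $G$. *)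

theory Defs
  imports "HOL-Analysis.Analysis" "HOL-Algebra.Group"
begin

definition grp_center :: "('a, 'b) monoid_scheme \<Rightarrow> 'a set" where
  "grp_center G = {z \<in> carrier G. \<forall>g \<in> carrier G. z \<otimes>\<^bsub>G\<^esub> g = g \<otimes>\<^bsub>G\<^esub> z}"

definition tuples :: "('a, 'b) monoid_scheme \<Rightarrow> nat \<Rightarrow> (nat \<Rightarrow> 'a) set" where
  "tuples G n = {0..<n} \<rightarrow>\<^sub>E carrier G"

definition comm_tuples :: "('a, 'b) monoid_scheme \<Rightarrow> nat \<Rightarrow> (nat \<Rightarrow> 'a) set" where
  "comm_tuples G n = {x \<in> tuples G n. \<forall>i<n. \<forall>j<n. x i \<otimes>\<^bsub>G\<^esub> x j = x j \<otimes>\<^bsub>G\<^esub> x i}"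

definition conj_tuple :: "('a, 'b) monoid_scheme \<Rightarrow> nat \<Rightarrow> 'a \<Rightarrow> (nat \<Rightarrow> 'a) \<Rightarrow> (nat \<Rightarrow> 'a)" where
  "conj_tuple G n g x = (\<lambda>i\<in>{0..<n}. g \<otimes>\<^bsub>G\<^esub> x i \<otimes>\<^bsub>G\<^esub> inv\<^bsub>G\<^esub> g)"

definition conj_orbit :: "('a, 'b) monoid_scheme \<Rightarrow> nat \<Rightarrow> (nat \<Rightarrow> 'a) \<Rightarrow> (nat \<Rightarrow> 'a) set" where
  "conj_orbit G n x = (\<lambda>g. conj_tuple G n g x) ` carrier G"

definition num_orbits :: "('a, 'b) monoid_scheme \<Rightarrow> nat \<Rightarrow> (nat \<Rightarrow> 'a) set \<Rightarrow> nat" where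
  "num_orbits G n X = card (conj_orbit G n ` X)"

definition alpha :: "('a, 'b) monoid_scheme \<Rightarrow> nat \<Rightarrow> nat" where
  "alpha G n = num_orbits G n (tuples G n)"

definition beta :: "('a, 'b) monoid_scheme \<Rightarrow> nat \<Rightarrow> nat" where
  "beta G n = num_orbits G n (comm_tuples G n)"

definition max_abelian_card :: "('a, 'b) monoid_scheme \<Rightarrow> nat" where
  "max_abelian_card G = Max {card H | H. subgroup H G \<and>
      (\<forall>x\<in>H. \<forall>y\<in>H. x \<otimes>\<^bsub>G\<^esub> y = y \<otimes>\<^bsub>G\<^esub> x)}"

end

(* Burnside's lemma turns each orbit count into a sum over g of the number of tuples fixed by g.
   The tuples fixed by g are those with entries in the centralizer C(g), so
   alpha_n |G| = sum_g |C(g)|^n, which is dominated by the |Z(G)| terms with C(g) = G.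
   The commuting tuples fixed by g are those with entries in some pairwise commuting subset
   of C(g). Such a subset lies in its double centralizer, an abelian subgroup, so it has at
   most a elements. A union of the n-th powers of finitely many sets of size at most a grows
   like m a^n, where m counts the sets of size exactly a: two distinct such sets meet in at
   most a - 1 elements, so their overlaps are O((a - 1)^n). For g = 1 a maximal abelian
   subgroup is such a set, which makes the constant positive. *)

theory Submission
  imports Defs "HOL-Algebra.Group_Action"
begin

lemma sum_card_le_card_UN_add_overlaps:
  assumes "finite M" and "\<And>A. A \<in> M \<Longrightarrow> finite (T A)"
  shows "(\<Sum>A\<in>M. card (T A)) \<le>
    card (\<Union>A\<in>M. T A) + (\<Sum>A\<in>M. \<Sum>B\<in>M - {A}. card (T A \<inter> T B))"
  using assms
proof (induction M rule: finite_induct)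
  case empty
  then show ?case by simp
next
  case (insert A M)
  let ?overlaps = "\<lambda>M. \<Sum>A\<in>M. \<Sum>B\<in>M - {A}. card (T A \<inter> T B)"
  have IH: "(\<Sum>B\<in>M. card (T B)) \<le> card (\<Union>B\<in>M. T B) + ?overlaps M"
    using insert.IH insert.prems by blast
  have overlaps_A: "card (T A \<inter> (\<Union>B\<in>M. T B)) \<le> (\<Sum>B\<in>M. card (T A \<inter> T B))"
    unfolding Int_UN_distrib by (rule card_UN_le[OF insert.hyps(1)])
  have "?overlaps M \<le> (\<Sum>A'\<in>M. \<Sum>B\<in>insert A M - {A'}. card (T A' \<inter> T B))"
    by (intro sum_mono sum_mono2) (use insert.hyps(1) in auto)
  then have overlaps_insert: "(\<Sum>B\<in>M. card (T A \<inter> T B)) + ?overlaps M \<le> ?overlaps (insert A M)"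
    using insert.hyps by (simp add: insert_Diff_if)
  have "card (T A) + card (\<Union>B\<in>M. T B) =
      card (T A \<union> (\<Union>B\<in>M. T B)) + card (T A \<inter> (\<Union>B\<in>M. T B))"
    by (rule card_Un_Int) (use insert in auto)
  then show ?case
    using IH overlaps_A overlaps_insert
    unfolding sum.insert[OF insert.hyps] image_insert Union_insert by linarith
qed

lemma card_UN_PiE_le:
  assumes "finite U" and "\<And>H. H \<in> U \<Longrightarrow> finite H" and "\<And>H. H \<in> U \<Longrightarrow> card H \<le> a"
  shows "card (\<Union>H\<in>U. {0..<n} \<rightarrow>\<^sub>E H) \<le>
    card {H \<in> U. card H = a} * a ^ n + card U * (a - 1) ^ n"
proof -
  let ?M = "{H \<in> U. card H = a}"
  have "card (\<Union>H\<in>U. {0..<n} \<rightarrow>\<^sub>E H) \<le> (\<Sum>H\<in>U. card H ^ n)"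
    using card_UN_le[OF assms(1), of "\<lambda>H. {0..<n} \<rightarrow>\<^sub>E H"] by (simp add: card_PiE)
  also have "\<dots> = (\<Sum>H\<in>U - ?M. card H ^ n) + (\<Sum>H\<in>?M. card H ^ n)"
    by (rule sum.subset_diff) (use assms(1) in auto)
  also have "\<dots> \<le> card (U - ?M) * (a - 1) ^ n + card ?M * a ^ n"
  proof (rule add_mono)
    have "card H ^ n \<le> (a - 1) ^ n" if "H \<in> U - ?M" for H
      using assms(3)[of H] that by (intro power_mono) auto
    then have "(\<Sum>H\<in>U - ?M. card H ^ n) \<le> of_nat (card (U - ?M)) * (a - 1) ^ n"
      by (rule sum_bounded_above)
    then show "(\<Sum>H\<in>U - ?M. card H ^ n) \<le> card (U - ?M) * (a - 1) ^ n" by simp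
  qed simp
  also have "\<dots> \<le> card U * (a - 1) ^ n + card ?M * a ^ n"
    using assms(1) by (intro add_mono mult_right_mono card_mono) auto
  finally show ?thesis by simp
qed

lemma card_UN_PiE_ge:
  assumes "finite U" and "\<And>H. H \<in> U \<Longrightarrow> finite H"
  shows "card {H \<in> U. card H = a} * a ^ n \<le>
    card (\<Union>H\<in>U. {0..<n} \<rightarrow>\<^sub>E H) + card {H \<in> U. card H = a} ^ 2 * (a - 1) ^ n"
proof -
  let ?M = "{H \<in> U. card H = a}"
  let ?T = "\<lambda>H. {0..<n} \<rightarrow>\<^sub>E H"
  have finM: "finite ?M" using assms(1) by simp
  have overlap: "card (?T A \<inter> ?T B) \<le> (a - 1) ^ n" if "A \<in> ?M" "B \<in> ?M - {A}" for A B
  proof -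
    have A: "finite A" "card A = a" and B: "finite B" "card B = a" "B \<noteq> A"
      using that assms(2) by auto
    have "A \<inter> B \<noteq> A"
    proof
      assume "A \<inter> B = A"
      then have "A \<subseteq> B" by blast
      then have "A = B" using card_subset_eq[OF B(1)] A(2) B(2) by simp
      then show False using B(3) by simp
    qed
    then have "card (A \<inter> B) < a"
      using A psubset_card_mono[of A "A \<inter> B"] by blast
    then show ?thesis by (simp add: PiE_Int card_PiE power_mono)
  qed
  have "card ?M * a ^ n = (\<Sum>A\<in>?M. card (?T A))"
    by (simp add: card_PiE)
  also have "\<dots> \<le> card (\<Union>A\<in>?M. ?T A) + (\<Sum>A\<in>?M. \<Sum>B\<in>?M - {A}. card (?T A \<inter> ?T B))"
    by (rule sum_card_le_card_UN_add_overlaps) (use assms(2) finM in \<open>auto intro: finite_PiE\<close>)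
  also have "\<dots> \<le> card (\<Union>H\<in>U. ?T H) + (\<Sum>A\<in>?M. \<Sum>B\<in>?M - {A}. (a - 1) ^ n)"
  proof (intro add_mono card_mono sum_mono)
    show "finite (\<Union>H\<in>U. ?T H)" using assms(1,2) by (auto intro: finite_PiE)
  qed (use overlap in auto)
  also have "\<dots> \<le> card (\<Union>H\<in>U. ?T H) + card ?M ^ 2 * (a - 1) ^ n"
    using finM by (simp add: power2_eq_square card_Diff_subset mult_le_mono)
  finally show ?thesis .
qed

lemma card_UN_PiE_asymptotic:
  assumes "finite U" and "\<And>H. H \<in> U \<Longrightarrow> finite H" and "\<And>H. H \<in> U \<Longrightarrow> card H \<le> a"
    and "a > 0"
  shows "(\<lambda>n. real (card (\<Union>H\<in>U. {0..<n} \<rightarrow>\<^sub>E H)) / real a ^ n)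
    \<longlonglongrightarrow> real (card {H \<in> U. card H = a})"
proof -
  define c where "c n = real (card (\<Union>H\<in>U. {0..<n} \<rightarrow>\<^sub>E H))" for n :: nat
  define m where "m = real (card {H \<in> U. card H = a})"
  define r where "r = (real a - 1) / real a"
  have r: "0 \<le> r" "r < 1" using \<open>a > 0\<close> by (auto simp: r_def)
  have lower: "m - m\<^sup>2 * r ^ n \<le> c n / real a ^ n" for n
  proof -
    have "real (card {H \<in> U. card H = a} * a ^ n) \<le>
        real (card (\<Union>H\<in>U. {0..<n} \<rightarrow>\<^sub>E H) + card {H \<in> U. card H = a} ^ 2 * (a - 1) ^ n)"
      using card_UN_PiE_ge[OF assms(1,2), of a n] by (simp only: of_nat_le_iff)
    then have "m * real a ^ n - m\<^sup>2 * (real a - 1) ^ n \<le> c n"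
      using \<open>a > 0\<close> by (simp add: c_def m_def)
    moreover have "(m - m\<^sup>2 * r ^ n) * real a ^ n = m * real a ^ n - m\<^sup>2 * (real a - 1) ^ n"
      using \<open>a > 0\<close> by (simp add: r_def power_divide algebra_simps)
    ultimately show ?thesis using \<open>a > 0\<close> by (simp add: pos_le_divide_eq)
  qed
  have upper: "c n / real a ^ n \<le> m + real (card U) * r ^ n" for n
  proof -
    have "real (card (\<Union>H\<in>U. {0..<n} \<rightarrow>\<^sub>E H)) \<le>
        real (card {H \<in> U. card H = a} * a ^ n + card U * (a - 1) ^ n)"
      using card_UN_PiE_le[OF assms(1-3), of n] by (simp only: of_nat_le_iff)
    then have "c n \<le> m * real a ^ n + real (card U) * (real a - 1) ^ n"
      using \<open>a > 0\<close> by (simp add: c_def m_def)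
    moreover have "(m + real (card U) * r ^ n) * real a ^ n =
        m * real a ^ n + real (card U) * (real a - 1) ^ n"
      using \<open>a > 0\<close> by (simp add: r_def power_divide algebra_simps)
    ultimately show ?thesis using \<open>a > 0\<close> by (simp add: pos_divide_le_eq)
  qed
  have lim_lower: "(\<lambda>n. m - m\<^sup>2 * r ^ n) \<longlonglongrightarrow> m"
    and lim_upper: "(\<lambda>n. m + real (card U) * r ^ n) \<longlonglongrightarrow> m"
    using LIMSEQ_realpow_zero[OF r] r by (auto intro!: tendsto_eq_intros)
  have "(\<lambda>n. c n / real a ^ n) \<longlonglongrightarrow> m"
    by (rule tendsto_sandwich[OF always_eventually always_eventually lim_lower lim_upper])
      (simp_all add: lower upper)
  then show ?thesis unfolding c_def m_def .
qed

lemma LIMSEQ_sum_div_sum_limits: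
  fixes f :: "'i \<Rightarrow> nat \<Rightarrow> real"
  assumes "finite I" and "\<And>i. i \<in> I \<Longrightarrow> (\<lambda>n. f i n / a ^ n) \<longlonglongrightarrow> L i"
    and "(\<Sum>i\<in>I. L i) \<noteq> 0"
  shows "(\<lambda>n. (\<Sum>i\<in>I. f i n) / ((\<Sum>i\<in>I. L i) * a ^ n)) \<longlonglongrightarrow> 1"
proof -
  have "(\<lambda>n. (\<Sum>i\<in>I. f i n / a ^ n) / (\<Sum>i\<in>I. L i)) \<longlonglongrightarrow> (\<Sum>i\<in>I. L i) / (\<Sum>i\<in>I. L i)"
    using assms by (intro tendsto_divide tendsto_sum tendsto_const) auto
  then show ?thesis
    using assms(3) by (simp add: sum_divide_distrib[symmetric] mult.commute)
qed

definition centralizer :: "('a, 'b) monoid_scheme \<Rightarrow> 'a set \<Rightarrow> 'a set" where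
  "centralizer G Y = {h \<in> carrier G. \<forall>y\<in>Y. h \<otimes>\<^bsub>G\<^esub> y = y \<otimes>\<^bsub>G\<^esub> h}"

definition pairwise_commuting :: "('a, 'b) monoid_scheme \<Rightarrow> 'a set \<Rightarrow> bool" where
  "pairwise_commuting G X \<longleftrightarrow> (\<forall>x\<in>X. \<forall>y\<in>X. x \<otimes>\<^bsub>G\<^esub> y = y \<otimes>\<^bsub>G\<^esub> x)"

definition commuting_subsets :: "('a, 'b) monoid_scheme \<Rightarrow> 'a set \<Rightarrow> 'a set set" where
  "commuting_subsets G S = {X. X \<subseteq> S \<and> pairwise_commuting G X}"

context group
begin

lemma subgroup_centralizer:
  assumes "Y \<subseteq> carrier G"
  shows "subgroup (centralizer G Y) G"
proof (rule subgroupI)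
  show "centralizer G Y \<subseteq> carrier G" by (auto simp: centralizer_def)
  have "\<one> \<in> centralizer G Y" using assms by (auto simp: centralizer_def)
  then show "centralizer G Y \<noteq> {}" by blast
next
  fix h k assume "h \<in> centralizer G Y" "k \<in> centralizer G Y"
  then show "h \<otimes> k \<in> centralizer G Y"
    using assms by (auto simp: centralizer_def m_assoc) (metis m_assoc subsetD)
next
  fix h assume h: "h \<in> centralizer G Y"
  have "inv h \<otimes> y = y \<otimes> inv h" if y: "y \<in> Y" for y
  proof -
    have hy: "h \<in> carrier G" "y \<in> carrier G" "h \<otimes> y = y \<otimes> h"
      using h y assms by (auto simp: centralizer_def)
    have "y \<otimes> inv h = inv h \<otimes> (h \<otimes> y) \<otimes> inv h" using hy(1,2) by (simp flip: m_assoc)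
    also have "\<dots> = inv h \<otimes> (y \<otimes> h) \<otimes> inv h" using hy(3) by simp
    also have "\<dots> = inv h \<otimes> y" using hy(1,2) by (simp add: m_assoc)
    finally show ?thesis by simp
  qed
  then show "inv h \<in> centralizer G Y" using h by (auto simp: centralizer_def)
qed

lemma finite_abelian_subgroup_cards:
  assumes "finite (carrier G)"
  shows "finite {card H | H. subgroup H G \<and> (\<forall>x\<in>H. \<forall>y\<in>H. x \<otimes> y = y \<otimes> x)}"
proof (rule finite_subset)
  show "{card H | H. subgroup H G \<and> (\<forall>x\<in>H. \<forall>y\<in>H. x \<otimes> y = y \<otimes> x)} \<subseteq> {..card (carrier G)}"
    using assms by (auto intro: card_mono dest: subgroup.subset)
qed simp

lemma max_abelian_card_attained:
  assumes "finite (carrier G)"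
  obtains A where "subgroup A G" "pairwise_commuting G A" "card A = max_abelian_card G"
proof -
  have "card {\<one>} \<in> {card H | H. subgroup H G \<and> (\<forall>x\<in>H. \<forall>y\<in>H. x \<otimes> y = y \<otimes> x)}"
    using triv_subgroup by blast
  then have "max_abelian_card G \<in> {card H | H. subgroup H G \<and> (\<forall>x\<in>H. \<forall>y\<in>H. x \<otimes> y = y \<otimes> x)}"
    unfolding max_abelian_card_def
    using finite_abelian_subgroup_cards[OF assms] by (intro Max_in) auto
  then show ?thesis using that by (auto simp: pairwise_commuting_def)
qed

lemma card_le_max_abelian_card:
  assumes "finite (carrier G)" and "subgroup H G" and "pairwise_commuting G H"
  shows "card H \<le> max_abelian_card G"
  unfolding max_abelian_card_def using assms
  by (auto simp: pairwise_commuting_def intro: Max_ge[OF finite_abelian_subgroup_cards])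

lemma card_commuting_le_max_abelian_card:
  assumes "finite (carrier G)" and "X \<subseteq> carrier G" and "pairwise_commuting G X"
  shows "card X \<le> max_abelian_card G"
proof -
  let ?H = "centralizer G (centralizer G X)"
  have "X \<subseteq> centralizer G X" using assms(2,3) by (auto simp: centralizer_def pairwise_commuting_def)
  then have "?H \<subseteq> centralizer G X" by (auto simp: centralizer_def)
  then have "pairwise_commuting G ?H" by (auto simp: centralizer_def pairwise_commuting_def)
  moreover have "subgroup ?H G" by (rule subgroup_centralizer) (auto simp: centralizer_def)
  moreover have "X \<subseteq> ?H" using assms(2) by (auto simp: centralizer_def)
  ultimately show ?thesis
    using card_mono[OF finite_subset[OF subgroup.subset assms(1)]]
      card_le_max_abelian_card[OF assms(1)]
    by (meson le_trans)
qed

lemma conj_tuple_mult: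
  assumes "g \<in> carrier G" "h \<in> carrier G" "x \<in> tuples G n"
  shows "conj_tuple G n (g \<otimes> h) x = conj_tuple G n g (conj_tuple G n h x)"
proof
  fix i
  show "conj_tuple G n (g \<otimes> h) x i = conj_tuple G n g (conj_tuple G n h x) i"
  proof (cases "i < n")
    case True
    then have "x i \<in> carrier G" using assms(3) by (auto simp: tuples_def)
    then show ?thesis using True assms by (simp add: conj_tuple_def m_assoc inv_mult_group)
  qed (simp add: conj_tuple_def)
qed

lemma conj_tuple_one:
  assumes "x \<in> tuples G n"
  shows "conj_tuple G n \<one> x = x"
proof
  fix i
  show "conj_tuple G n \<one> x i = x i"
  proof (cases "i < n")
    case True
    then have "x i \<in> carrier G" using assms by (auto simp: tuples_def)
    then show ?thesis using True by (simp add: conj_tuple_def)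
  qed (use assms in \<open>auto simp: conj_tuple_def tuples_def PiE_def extensional_def\<close>)
qed

lemma conj_tuple_closed:
  assumes "g \<in> carrier G" "x \<in> tuples G n"
  shows "conj_tuple G n g x \<in> tuples G n"
proof -
  have "g \<otimes> x i \<otimes> inv g \<in> carrier G" if "i \<in> {0..<n}" for i
    using assms(1) PiE_mem[OF assms(2)[unfolded tuples_def] that] by simp
  then show ?thesis by (simp add: conj_tuple_def tuples_def)
qed

lemma conj_comm_tuple_closed:
  assumes g: "g \<in> carrier G" and x: "x \<in> comm_tuples G n"
  shows "conj_tuple G n g x \<in> comm_tuples G n"
proof -
  have "conj_tuple G n g x i \<otimes> conj_tuple G n g x j = conj_tuple G n g x j \<otimes> conj_tuple G n g x i"
    if "i < n" "j < n" for i j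
  proof -
    have xij: "x i \<in> carrier G" "x j \<in> carrier G" and comm: "x i \<otimes> x j = x j \<otimes> x i"
      using x that by (auto simp: comm_tuples_def tuples_def)
    have "g \<otimes> x i \<otimes> inv g \<otimes> (g \<otimes> x j \<otimes> inv g) = g \<otimes> (x i \<otimes> x j) \<otimes> inv g"
      using xij g by (simp add: m_assoc[symmetric]) (simp add: m_assoc)
    also have "\<dots> = g \<otimes> (x j \<otimes> x i) \<otimes> inv g" using comm by simp
    also have "\<dots> = g \<otimes> x j \<otimes> inv g \<otimes> (g \<otimes> x i \<otimes> inv g)"
      using xij g by (simp add: m_assoc[symmetric]) (simp add: m_assoc)
    finally show ?thesis using that by (simp add: conj_tuple_def)
  qed
  moreover have "conj_tuple G n g x \<in> tuples G n"
    using g x by (auto simp: comm_tuples_def intro: conj_tuple_closed)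
  ultimately show ?thesis by (simp add: comm_tuples_def)
qed

lemma conj_tuple_inv:
  assumes "g \<in> carrier G" "x \<in> tuples G n"
  shows "conj_tuple G n (inv g) (conj_tuple G n g x) = x"
  using conj_tuple_mult[of "inv g" g x n] conj_tuple_one[of x n] assms by simp

lemma conj_tuple_group_action:
  assumes E: "E \<subseteq> tuples G n"
    and stable: "\<And>g x. g \<in> carrier G \<Longrightarrow> x \<in> E \<Longrightarrow> conj_tuple G n g x \<in> E"
  shows "group_action G E (\<lambda>g. restrict (conj_tuple G n g) E)"
proof -
  let ?\<phi> = "\<lambda>g. restrict (conj_tuple G n g) E"
  have bij: "?\<phi> g \<in> Bij E" if g: "g \<in> carrier G" for g
  proof -
    have "bij_betw (conj_tuple G n g) E E"
      by (rule bij_betw_byWitness[where f' = "conj_tuple G n (inv g)"])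
        (use E stable g conj_tuple_inv[of "inv g"] conj_tuple_inv[of g] in auto)
    then show ?thesis by (simp add: Bij_def)
  qed
  have "?\<phi> \<in> hom G (BijGroup E)"
  proof (rule homI)
    show "?\<phi> g \<in> carrier (BijGroup E)" if "g \<in> carrier G" for g
      using bij[OF that] by (simp add: BijGroup_def)
    show "?\<phi> (g \<otimes> h) = ?\<phi> g \<otimes>\<^bsub>BijGroup E\<^esub> ?\<phi> h"
      if g: "g \<in> carrier G" and h: "h \<in> carrier G" for g h
    proof -
      have "?\<phi> g \<otimes>\<^bsub>BijGroup E\<^esub> ?\<phi> h = compose E (?\<phi> g) (?\<phi> h)"
        using bij[OF g] bij[OF h] by (simp add: BijGroup_def)
      also have "\<dots> = ?\<phi> (g \<otimes> h)"
      proof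
        fix x
        show "compose E (?\<phi> g) (?\<phi> h) x = ?\<phi> (g \<otimes> h) x"
          using conj_tuple_mult[OF g h, of x n] stable[OF h, of x] E by (auto simp: compose_def)
      qed
      finally show ?thesis by simp
    qed
  qed
  then show ?thesis
    unfolding group_action_def group_hom_def group_hom_axioms_def
    using group_BijGroup is_group by auto
qed

lemma num_orbits_mult_card:
  assumes fin: "finite (carrier G)" and E: "E \<subseteq> tuples G n"
    and stable: "\<And>g x. g \<in> carrier G \<Longrightarrow> x \<in> E \<Longrightarrow> conj_tuple G n g x \<in> E"
  shows "num_orbits G n E * card (carrier G) =
    (\<Sum>g\<in>carrier G. card {x \<in> E. conj_tuple G n g x = x})"
proof -
  interpret group_action G E "\<lambda>g. restrict (conj_tuple G n g) E"
    by (rule conj_tuple_group_action[OF E stable])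
  have "finite E"
    using E fin by (auto simp: tuples_def intro: finite_subset finite_PiE)
  moreover have "orbits G E (\<lambda>g. restrict (conj_tuple G n g) E) = conj_orbit G n ` E"
    by (auto simp: orbits_def orbit_def conj_orbit_def)
  moreover have "invariants E (\<lambda>g. restrict (conj_tuple G n g) E) g =
      {x \<in> E. conj_tuple G n g x = x}" for g
    by (auto simp: invariants_def)
  ultimately show ?thesis
    using burnside[OF fin] by (simp add: num_orbits_def order_def)
qed

lemma conj_eq_self_iff:
  assumes "g \<in> carrier G" "h \<in> carrier G"
  shows "g \<otimes> h \<otimes> inv g = h \<longleftrightarrow> g \<otimes> h = h \<otimes> g"
proof
  assume "g \<otimes> h \<otimes> inv g = h"
  then have "g \<otimes> h \<otimes> inv g \<otimes> g = h \<otimes> g" by simp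
  then show "g \<otimes> h = h \<otimes> g" using assms by (simp add: m_assoc)
next
  assume "g \<otimes> h = h \<otimes> g"
  then show "g \<otimes> h \<otimes> inv g = h" using assms by (simp add: m_assoc)
qed

lemma conj_tuple_eq_self_iff:
  assumes g: "g \<in> carrier G" and x: "x \<in> tuples G n"
  shows "conj_tuple G n g x = x \<longleftrightarrow> x \<in> {0..<n} \<rightarrow>\<^sub>E centralizer G {g}"
proof -
  have carrier: "x i \<in> carrier G" if "i < n" for i
    using x that by (auto simp: tuples_def)
  have ext: "x \<in> extensional {0..<n}"
    using x by (simp add: tuples_def PiE_iff)
  have "conj_tuple G n g x = x \<longleftrightarrow> (\<forall>i<n. g \<otimes> x i \<otimes> inv g = x i)"
    using ext unfolding conj_tuple_def fun_eq_iff extensional_def by (auto simp: not_less)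
  also have "\<dots> \<longleftrightarrow> (\<forall>i<n. g \<otimes> x i = x i \<otimes> g)"
    by (simp add: conj_eq_self_iff[OF g carrier])
  also have "\<dots> \<longleftrightarrow> x \<in> {0..<n} \<rightarrow>\<^sub>E centralizer G {g}"
    using carrier ext by (auto simp: PiE_iff centralizer_def)
  finally show ?thesis .
qed

lemma fixed_tuples_eq:
  assumes "g \<in> carrier G"
  shows "{x \<in> tuples G n. conj_tuple G n g x = x} = {0..<n} \<rightarrow>\<^sub>E centralizer G {g}"
proof -
  have "{0..<n} \<rightarrow>\<^sub>E centralizer G {g} \<subseteq> tuples G n"
    unfolding tuples_def by (rule PiE_mono) (auto simp: centralizer_def)
  then show ?thesis using conj_tuple_eq_self_iff[OF assms] by blast
qed

lemma fixed_comm_tuples_eq: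
  assumes "g \<in> carrier G"
  shows "{x \<in> comm_tuples G n. conj_tuple G n g x = x} =
    (\<Union>X\<in>commuting_subsets G (centralizer G {g}). {0..<n} \<rightarrow>\<^sub>E X)"
proof (intro equalityI subsetI)
  fix x assume "x \<in> {x \<in> comm_tuples G n. conj_tuple G n g x = x}"
  then have "x \<in> {0..<n} \<rightarrow>\<^sub>E x ` {0..<n}" "x ` {0..<n} \<in> commuting_subsets G (centralizer G {g})"
    using fixed_tuples_eq[OF assms, of n]
    by (auto simp: comm_tuples_def commuting_subsets_def pairwise_commuting_def PiE_iff)
  then show "x \<in> (\<Union>X\<in>commuting_subsets G (centralizer G {g}). {0..<n} \<rightarrow>\<^sub>E X)" by blast
next
  fix x assume "x \<in> (\<Union>X\<in>commuting_subsets G (centralizer G {g}). {0..<n} \<rightarrow>\<^sub>E X)"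
  then obtain X where X: "X \<subseteq> centralizer G {g}" "pairwise_commuting G X"
    and x: "x \<in> {0..<n} \<rightarrow>\<^sub>E X"
    by (auto simp: commuting_subsets_def)
  then have "x \<in> {0..<n} \<rightarrow>\<^sub>E centralizer G {g}" by (auto simp: PiE_iff)
  then have "x \<in> tuples G n" "conj_tuple G n g x = x"
    using fixed_tuples_eq[OF assms, of n] by blast+
  moreover have "\<forall>i<n. \<forall>j<n. x i \<otimes> x j = x j \<otimes> x i"
    using x X(2) by (auto simp: pairwise_commuting_def PiE_iff)
  ultimately show "x \<in> {x \<in> comm_tuples G n. conj_tuple G n g x = x}"
    by (simp add: comm_tuples_def)
qed

lemma alpha_mult_card:
  assumes "finite (carrier G)"
  shows "alpha G n * card (carrier G) = (\<Sum>g\<in>carrier G. card (centralizer G {g}) ^ n)"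
  unfolding alpha_def
  by (simp add: num_orbits_mult_card[OF assms] conj_tuple_closed fixed_tuples_eq card_PiE)

lemma beta_mult_card:
  assumes "finite (carrier G)"
  shows "beta G n * card (carrier G) =
    (\<Sum>g\<in>carrier G. card (\<Union>X\<in>commuting_subsets G (centralizer G {g}). {0..<n} \<rightarrow>\<^sub>E X))"
proof -
  have "beta G n * card (carrier G) =
      (\<Sum>g\<in>carrier G. card {x \<in> comm_tuples G n. conj_tuple G n g x = x})"
    unfolding beta_def
    by (rule num_orbits_mult_card[OF assms _ conj_comm_tuple_closed]) (auto simp: comm_tuples_def)
  then show ?thesis by (simp add: fixed_comm_tuples_eq)
qed

lemma centralizer_power_ratio_limit:
  assumes fin: "finite (carrier G)" and g: "g \<in> carrier G"
  shows "(\<lambda>n. real (card (centralizer G {g})) ^ n / real (card (carrier G)) ^ n)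
    \<longlonglongrightarrow> (if g \<in> grp_center G then 1 else 0)"
proof (cases "g \<in> grp_center G")
  case True
  then have "centralizer G {g} = carrier G"
    by (auto simp: grp_center_def centralizer_def)
  moreover have "card (carrier G) > 0" using fin g by (auto simp: card_gt_0_iff)
  ultimately show ?thesis using True by simp
next
  case False
  then obtain h where h: "h \<in> carrier G" "g \<otimes> h \<noteq> h \<otimes> g"
    using g by (auto simp: grp_center_def)
  then have "h \<notin> centralizer G {g}" by (auto simp: centralizer_def)
  then have "centralizer G {g} \<subset> carrier G" using h(1) by (auto simp: centralizer_def)
  then have "card (centralizer G {g}) < card (carrier G)"
    by (rule psubset_card_mono[OF fin])
  then have "(\<lambda>n. (real (card (centralizer G {g})) / real (card (carrier G))) ^ n) \<longlonglongrightarrow> 0"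
    by (intro LIMSEQ_realpow_zero) auto
  then show ?thesis using False by (simp add: power_divide)
qed

lemma alpha_asymptotic:
  assumes fin: "finite (carrier G)"
  shows "(\<lambda>n. real (alpha G n) /
    (real (card (grp_center G)) * real (card (carrier G)) ^ (n - 1))) \<longlonglongrightarrow> 1"
proof -
  let ?N = "real (card (carrier G))"
  let ?Z = "real (card (grp_center G))"
  let ?c = "\<lambda>n. \<Sum>g\<in>carrier G. real (card (centralizer G {g})) ^ n"
  have center: "grp_center G \<subseteq> carrier G" "\<one> \<in> grp_center G"
    by (auto simp: grp_center_def)
  have sum_center: "(\<Sum>g\<in>carrier G. if g \<in> grp_center G then 1 else 0) = ?Z"
    using center fin by (simp add: sum.If_cases Int_absorb1)
  have "card (grp_center G) > 0"
    using center fin by (auto simp: card_gt_0_iff finite_subset)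
  then have "(\<lambda>n. ?c n / ((\<Sum>g\<in>carrier G. if g \<in> grp_center G then 1 else 0) * ?N ^ n)) \<longlonglongrightarrow> 1"
    by (intro LIMSEQ_sum_div_sum_limits fin centralizer_power_ratio_limit)
      (simp_all add: sum_center)
  then have lim: "(\<lambda>n. ?c n / (?Z * ?N ^ n)) \<longlonglongrightarrow> 1"
    unfolding sum_center .
  have "?N > 0" using fin by (auto simp: card_gt_0_iff)
  have "?c n / (?Z * ?N ^ n) = real (alpha G n) / (?Z * ?N ^ (n - 1))" if "n \<ge> 1" for n
  proof -
    have "?c n = real (alpha G n) * ?N"
      using arg_cong[OF alpha_mult_card[OF fin, of n], of real] by simp
    moreover have "?N ^ n = ?N ^ (n - 1) * ?N" using that by (cases n) (simp_all add: mult.commute)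
    ultimately have "?c n / (?Z * ?N ^ n) = real (alpha G n) * ?N / (?Z * ?N ^ (n - 1) * ?N)"
      by (simp only: mult.assoc)
    also have "\<dots> = real (alpha G n) / (?Z * ?N ^ (n - 1))"
      using \<open>?N > 0\<close> by simp
    finally show ?thesis .
  qed
  then have "\<forall>\<^sub>F n in sequentially. ?c n / (?Z * ?N ^ n) = real (alpha G n) / (?Z * ?N ^ (n - 1))"
    by (intro eventually_sequentiallyI)
  then show ?thesis by (rule Lim_transform_eventually[OF lim])
qed

lemma max_abelian_card_pos:
  assumes "finite (carrier G)"
  shows "max_abelian_card G > 0"
proof -
  obtain A where A: "subgroup A G" "pairwise_commuting G A" "card A = max_abelian_card G"
    using max_abelian_card_attained[OF assms] .
  have "finite A" using finite_subset[OF subgroup.subset[OF A(1)] assms] .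
  then have "card A > 0" using subgroup.one_closed[OF A(1)] by (auto simp: card_gt_0_iff)
  then show ?thesis using A(3) by simp
qed

lemma commuting_tuples_asymptotic:
  assumes fin: "finite (carrier G)" and S: "S \<subseteq> carrier G"
  shows "(\<lambda>n. real (card (\<Union>X\<in>commuting_subsets G S. {0..<n} \<rightarrow>\<^sub>E X)) /
      real (max_abelian_card G) ^ n)
    \<longlonglongrightarrow> real (card {X \<in> commuting_subsets G S. card X = max_abelian_card G})"
proof (rule card_UN_PiE_asymptotic)
  show "finite (commuting_subsets G S)"
  proof (rule finite_subset)
    show "commuting_subsets G S \<subseteq> Pow (carrier G)" using S by (auto simp: commuting_subsets_def)
  qed (use fin in simp)
  fix X assume "X \<in> commuting_subsets G S"
  then have X: "X \<subseteq> carrier G" "pairwise_commuting G X"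
    using S by (auto simp: commuting_subsets_def)
  show "finite X" using X(1) fin by (rule finite_subset)
  show "card X \<le> max_abelian_card G" using card_commuting_le_max_abelian_card[OF fin X] .
qed (rule max_abelian_card_pos[OF fin])

lemma card_maximal_commuting_subsets_pos:
  assumes "finite (carrier G)"
  shows "card {X \<in> commuting_subsets G (carrier G). card X = max_abelian_card G} > 0"
proof -
  obtain A where A: "subgroup A G" "pairwise_commuting G A" "card A = max_abelian_card G"
    using max_abelian_card_attained[OF assms] .
  then have "A \<in> {X \<in> commuting_subsets G (carrier G). card X = max_abelian_card G}"
    using subgroup.subset[OF A(1)] by (auto simp: commuting_subsets_def)
  moreover have "finite (commuting_subsets G (carrier G))"
    using assms by (auto simp: commuting_subsets_def)
  ultimately show ?thesis by (auto simp: card_gt_0_iff)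
qed

lemma beta_asymptotic:
  assumes fin: "finite (carrier G)"
  shows "\<exists>C::real. C > 0 \<and>
    (\<lambda>n. real (beta G n) / (C * real (max_abelian_card G) ^ n)) \<longlonglongrightarrow> 1"
proof -
  let ?a = "real (max_abelian_card G)"
  let ?N = "real (card (carrier G))"
  define U where "U g = commuting_subsets G (centralizer G {g})" for g
  define L where "L g = real (card {X \<in> U g. card X = max_abelian_card G})" for g
  define c where "c g n = real (card (\<Union>X\<in>U g. {0..<n} \<rightarrow>\<^sub>E X))" for g and n :: nat
  have "centralizer G {\<one>} = carrier G" by (auto simp: centralizer_def)
  then have "L \<one> > 0" using card_maximal_commuting_subsets_pos[OF fin] by (simp add: L_def U_def)
  moreover have "L \<one> \<le> (\<Sum>g\<in>carrier G. L g)"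
    by (rule member_le_sum) (simp_all add: L_def fin)
  ultimately have L_pos: "(\<Sum>g\<in>carrier G. L g) > 0" by linarith
  have "(\<lambda>n. (\<Sum>g\<in>carrier G. c g n) / ((\<Sum>g\<in>carrier G. L g) * ?a ^ n)) \<longlonglongrightarrow> 1"
    using L_pos unfolding c_def L_def U_def
    by (intro LIMSEQ_sum_div_sum_limits fin commuting_tuples_asymptotic)
      (auto simp: centralizer_def)
  moreover have N_pos: "?N > 0" using fin by (auto simp: card_gt_0_iff)
  define C where "C = (\<Sum>g\<in>carrier G. L g) / ?N"
  have "(\<Sum>g\<in>carrier G. c g n) / ((\<Sum>g\<in>carrier G. L g) * ?a ^ n) = real (beta G n) / (C * ?a ^ n)"
    for n
  proof -
    have "(\<Sum>g\<in>carrier G. c g n) = real (beta G n) * ?N"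
      using arg_cong[OF beta_mult_card[OF fin, of n], of real] by (simp add: c_def U_def)
    then show ?thesis using N_pos max_abelian_card_pos[OF fin] by (simp add: C_def field_simps)
  qed
  moreover have "C > 0" using L_pos N_pos by (simp add: C_def)
  ultimately show ?thesis by auto
qed

end

theorem theorem3p1:
  fixes G :: "('a, 'b) monoid_scheme"
  assumes "group G" and "finite (carrier G)"
  shows "((\<lambda>n. real (alpha G n) /
            (real (card (grp_center G)) * real (card (carrier G)) ^ (n - 1)))
           \<longlonglongrightarrow> 1) \<and>
         (\<exists>C::real. C > 0 \<and>
           (\<lambda>n. real (beta G n) / (C * real (max_abelian_card G) ^ n)) \<longlonglongrightarrow> 1)"
  using group.alpha_asymptotic[OF assms] group.beta_asymptotic[OF assms] by blast

end
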